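(* Let $\boldsymbol{\Psi}_{\mathrm{id}}=\mathrm{diag}(\psi_{\mathrm{id},1},\dots,\psi_{\mathrm{id},N})$ with all $\psi_{\mathrm{id},i}>0$, $\boldsymbol{\Psi}_{\mathrm{f}}=\mathrm{diag}(\psi_{\mathrm{f},1},\dots,\psi_{\mathrm{f},K})$ with all $\psi_{\mathrm{f},k}>0$, and $\mathbf{W}=[\mathbf{w}_1\ \cdots\ \mathbf{w}_K]\in\mathbb{R}^{N\times K}$ with linearly independent columns. For scalars $\alpha,\beta\in(0,1]$ let $\mathbf{G}=\left(\alpha\boldsymbol{\Psi}_{\mathrm{id}}+\beta\mathbf{W}\boldsymbol{\Psi}_{\mathrm{f}}\mathbf{W}^\top\right)^{-1}$ and, for $\mathbf{v}\in\mathbb{R}^N$, $\bar{\mathcal{C}}(\mathbf{v})=\tfrac12\mathbf{v}^\top\mathbf{G}\mathbf{v}$ (which depends on $\alpha,\beta$). Then: (i) $\displaystyle\lim_{\alpha\to1,\beta\to0}\bar{\mathcal{C}}(\mathbf{v})=\tfrac12\mathbf{v}^\top\boldsymbol{\Psi}_{\mathrm{id}}^{-1}\mathbf{v}=\tfrac12\sum_{i=1}^N\frac{v_i^2}{\psi_{\mathrm{id},i}}$; (ii) $\displaystyle\lim_{\alpha\to0,\beta\to1}\bar{\mathcal{C}}(\mathbf{v})=\infty$ if $\mathbf{v}\notin\mathrm{span}(\mathbf{w}_1,\dots,\mathbf{w}_K)$, and $\displaystyle\lim_{\alpha\to0,\beta\to1}\bar{\mathcal{C}}(\mathbf{v})=\tfrac12\mathbf{u}^\top\boldsymbol{\Psi}_{\mathrm{f}}^{-1}\mathbf{u}$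 if $\mathbf{v}=\mathbf{W}\mathbf{u}$ with $\mathbf{u}\in\mathbb{R}^K$.
   Context: $\bar{\mathcal{C}}(\mathbf{v})$ is the one-period expected implementation shortfall of executing $\mathbf{v}$ shares under linear price impact with coefficient matrix $\mathbf{G}$. *)

theory Defs
  imports "HOL-Analysis.Analysis"
begin

definition diag_mat :: "real ^ 'n \<Rightarrow> real ^ 'n ^ 'n" where
  "diag_mat d = (\<chi> i j. if i = j then d $ i else 0)"

definition lin_indep_columns :: "real ^ 'k ^ 'n \<Rightarrow> bool" where
  "lin_indep_columns W \<longleftrightarrow> (\<forall>u. W *v u = 0 \<longrightarrow> u = 0)"

definition impactG :: "real ^ 'n \<Rightarrow> real ^ 'k \<Rightarrow> real ^ 'k ^ 'n \<Rightarrow> real \<Rightarrow> real \<Rightarrow> real ^ 'n ^ 'n" where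
  "impactG psi_id psi_f W \<alpha> \<beta> =
     matrix_inv (\<alpha> *\<^sub>R diag_mat psi_id + \<beta> *\<^sub>R (W ** diag_mat psi_f ** transpose W))"

definition Cbar :: "real ^ 'n \<Rightarrow> real ^ 'k \<Rightarrow> real ^ 'k ^ 'n \<Rightarrow> real \<Rightarrow> real \<Rightarrow> real ^ 'n \<Rightarrow> real" where
  "Cbar psi_id psi_f W \<alpha> \<beta> v = 1/2 * (v \<bullet> (impactG psi_id psi_f W \<alpha> \<beta> *v v))"

end

theory Submission
  imports Defs
begin

(* For a symmetric positive definite A the quadratic form of A\<inverse> is a Legendre transform:
  v \<bullet> A\<inverse> v = max\<^sub>x (2 v \<bullet> x - x \<bullet> A x), attained at x = A\<inverse> v. Applied to
  G\<inverse> = \<alpha> \<Psi>\<^sub>i\<^sub>d + \<beta> W \<Psi>\<^sub>f W\<^sup>T, every test vector x bounds 2 Cbar(v) from below, while dropping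
  one of the two nonnegative terms of x \<bullet> G\<inverse> x bounds 2 Cbar(v) from above by v \<bullet> \<Psi>\<^sub>i\<^sub>d\<inverse> v / \<alpha>,
  resp. by u \<bullet> \<Psi>\<^sub>f\<inverse> u / \<beta> when v = W u. The test vectors x = \<Psi>\<^sub>i\<^sub>d\<inverse> v, resp. any x with
  W\<^sup>T x = \<Psi>\<^sub>f\<inverse> u, give lower bounds with the same limits. If v is not in the span of the
  columns of W, test vectors along some z orthogonal to the columns with v \<bullet> z \<noteq> 0 only see
  the \<alpha>-term, which gives 2 Cbar(v) \<ge> \<kappa> / \<alpha> with \<kappa> > 0. *)

definition positive_definite :: "real ^ 'n ^ 'n \<Rightarrow> bool" where
  "positive_definite A \<longleftrightarrow> transpose A = A \<and> (\<forall>x. x \<noteq> 0 \<longrightarrow> 0 < x \<bullet> (A *v x))"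

lemma inner_matrix_vector_transpose: "x \<bullet> (A *v y) = (transpose A *v x) \<bullet> (y :: real ^ 'n)"
  by (simp add: dot_lmul_matrix)

lemma positive_definite_nonneg: "positive_definite A \<Longrightarrow> 0 \<le> x \<bullet> (A *v x)"
  unfolding positive_definite_def by (cases "x = 0") (auto intro: less_imp_le)

lemma positive_definite_inner_commute:
  "positive_definite A \<Longrightarrow> x \<bullet> (A *v y) = y \<bullet> (A *v x)"
  unfolding positive_definite_def by (metis inner_commute inner_matrix_vector_transpose)

lemma matrix_inv_unique:
  fixes A B :: "real ^ 'n ^ 'n"
  assumes "A ** B = mat 1"
  shows "matrix_inv A = B"
  unfolding matrix_inv_def
proof (rule some_equality)
  have "B ** A = mat 1"
    using assms matrix_left_right_inverse by blast
  with assms show "A ** B = mat 1 \<and> B ** A = mat 1" ..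
next
  fix X assume "A ** X = mat 1 \<and> X ** A = mat 1"
  then have "X ** A = mat 1" ..
  have "X = X ** (A ** B)"
    using assms by simp
  also have "\<dots> = B"
    using \<open>X ** A = mat 1\<close> by (simp add: matrix_mul_assoc)
  finally show "X = B" .
qed

lemma positive_definite_matrix_inv_right:
  assumes "positive_definite A"
  shows "A ** matrix_inv A = mat 1"
proof -
  have "A *v x = 0 \<Longrightarrow> x = 0" for x
    using assms unfolding positive_definite_def by force
  then have "invertible A"
    by (auto simp: invertible_left_inverse matrix_left_invertible_ker)
  then show ?thesis
    unfolding invertible_def matrix_inv_def by (rule someI_ex[THEN conjunct1])
qed

lemma positive_definite_matrix_inv_cancel:
  "positive_definite A \<Longrightarrow> A *v (matrix_inv A *v v) = v"
  by (simp add: matrix_vector_mul_assoc positive_definite_matrix_inv_right)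

lemma inner_matrix_inv_ge:
  assumes A: "positive_definite A"
  shows "2 * (v \<bullet> x) - x \<bullet> (A *v x) \<le> v \<bullet> (matrix_inv A *v v)"
proof -
  define y where "y = matrix_inv A *v v"
  have Ay: "A *v y = v"
    unfolding y_def using A by (rule positive_definite_matrix_inv_cancel)
  have "0 \<le> (x - y) \<bullet> (A *v (x - y))"
    using A by (rule positive_definite_nonneg)
  also have "\<dots> = x \<bullet> (A *v x) - 2 * (v \<bullet> x) + v \<bullet> y"
    using positive_definite_inner_commute[OF A, of x y] Ay
    by (simp add: matrix_vector_mult_diff_distrib inner_diff_left inner_diff_right inner_commute)
  finally show ?thesis
    unfolding y_def by simp
qed

lemma inner_matrix_inv_ge_scaled:
  assumes "positive_definite A" "0 < a"
  shows "2 * (v \<bullet> x) - a * (x \<bullet> (A *v x)) \<le> v \<bullet> (matrix_inv A *v v) / a"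
proof -
  have "a * (2 * (v \<bullet> x) - a * (x \<bullet> (A *v x))) \<le> v \<bullet> (matrix_inv A *v v)"
    using inner_matrix_inv_ge[OF assms(1), of v "a *\<^sub>R x"]
    by (simp add: matrix_vector_mult_scaleR algebra_simps power2_eq_square)
  with assms(2) show ?thesis
    by (simp add: pos_le_divide_eq mult.commute)
qed

lemma inner_matrix_inv_le:
  assumes "positive_definite A" "\<And>x. 2 * (v \<bullet> x) - x \<bullet> (A *v x) \<le> c"
  shows "v \<bullet> (matrix_inv A *v v) \<le> c"
  using assms(2)[of "matrix_inv A *v v"]
  by (simp add: positive_definite_matrix_inv_cancel[OF assms(1)] inner_commute)

lemma diag_mat_mult_vec: "diag_mat d *v x = (\<chi> i. d $ i * x $ i)"
  unfolding diag_mat_def matrix_vector_mult_def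
  by (simp add: vec_eq_iff if_distrib[of "\<lambda>a. a * b" for b] cong: if_cong)

lemma inner_diag_mat: "x \<bullet> (diag_mat d *v x) = (\<Sum>i\<in>UNIV. d $ i * (x $ i)\<^sup>2)"
  by (simp add: diag_mat_mult_vec inner_vec_def power2_eq_square algebra_simps)

lemma transpose_diag_mat: "transpose (diag_mat d) = diag_mat d"
  by (simp add: diag_mat_def transpose_def vec_eq_iff)

lemma positive_definite_diag_mat:
  assumes "\<And>i. 0 < d $ i"
  shows "positive_definite (diag_mat d)"
  unfolding positive_definite_def
proof safe
  fix x :: "real ^ 'a" assume "x \<noteq> 0"
  then obtain j where "x $ j \<noteq> 0"
    by (metis vec_eq_iff zero_index)
  then have "0 < d $ j * (x $ j)\<^sup>2"
    using assms by simp
  also have "\<dots> \<le> (\<Sum>i\<in>UNIV. d $ i * (x $ i)\<^sup>2)"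
  proof (rule member_le_sum)
    show "0 \<le> d $ i * (x $ i)\<^sup>2" for i
      using assms[of i] by simp
  qed simp_all
  finally show "0 < x \<bullet> (diag_mat d *v x)"
    by (simp add: inner_diag_mat)
qed (rule transpose_diag_mat)

lemma matrix_inv_diag_mat:
  assumes "\<And>i. d $ i \<noteq> 0"
  shows "matrix_inv (diag_mat d) = diag_mat (\<chi> i. 1 / d $ i)"
  by (rule matrix_inv_unique) (unfold diag_mat_def matrix_matrix_mult_def mat_def,
    simp add: vec_eq_iff if_distrib[of "\<lambda>a. a * b" for b] assms cong: if_cong)

lemma inner_matrix_inv_diag_mat:
  "(\<And>i. d $ i \<noteq> 0) \<Longrightarrow> x \<bullet> (matrix_inv (diag_mat d) *v x) = (\<Sum>i\<in>UNIV. (x $ i)\<^sup>2 / d $ i)"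
  by (simp add: matrix_inv_diag_mat inner_diag_mat power2_eq_square)

lemma lin_indep_columns_transpose_surj:
  assumes "lin_indep_columns W"
  obtains x where "transpose W *v x = y"
proof -
  obtain B where "B ** W = mat 1"
    using assms matrix_left_invertible_ker unfolding lin_indep_columns_def by blast
  then have "transpose W ** transpose B = mat 1"
    by (metis matrix_transpose_mul transpose_mat)
  then have "transpose W *v (transpose B *v y) = y"
    by (simp only: matrix_vector_mul_assoc matrix_vector_mul_lid)
  then show ?thesis ..
qed

lemma not_in_span_columns_orthogonal:
  fixes W :: "real ^ 'k ^ 'n"
  assumes "v \<notin> span (columns W)"
  obtains z where "transpose W *v z = 0" "v \<bullet> z \<noteq> 0"
proof -
  obtain y z where y: "y \<in> span (columns W)"
    and z: "\<And>w. w \<in> span (columns W) \<Longrightarrow> orthogonal z w" and v: "v = y + z"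
    using orthogonal_subspace_decomp_exists by blast
  have "z \<bullet> column k W = 0" for k
    using z[OF span_base] by (auto simp: columns_def orthogonal_def)
  then have "transpose W *v z = 0"
    by (simp add: vec_eq_iff matrix_vector_mult_def transpose_def column_def inner_vec_def mult.commute)
  moreover have "v \<bullet> z \<noteq> 0"
  proof -
    have "y \<bullet> z = 0"
      using z[OF y] by (simp add: orthogonal_def inner_commute)
    moreover have "z \<noteq> 0"
      using assms y v by auto
    ultimately show ?thesis
      by (simp add: v inner_add_left)
  qed
  ultimately show ?thesis ..
qed

definition inv_impactG :: "real ^ 'n \<Rightarrow> real ^ 'k \<Rightarrow> real ^ 'k ^ 'n \<Rightarrow> real \<Rightarrow> real \<Rightarrow> real ^ 'n ^ 'n" where
  "inv_impactG psi_id psi_f W \<alpha> \<beta> =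
     \<alpha> *\<^sub>R diag_mat psi_id + \<beta> *\<^sub>R (W ** diag_mat psi_f ** transpose W)"

lemma impactG_eq_matrix_inv: "impactG psi_id psi_f W \<alpha> \<beta> = matrix_inv (inv_impactG psi_id psi_f W \<alpha> \<beta>)"
  by (simp add: impactG_def inv_impactG_def)

lemma inner_inv_impactG:
  "x \<bullet> (inv_impactG psi_id psi_f W \<alpha> \<beta> *v x) =
     \<alpha> * (x \<bullet> (diag_mat psi_id *v x))
     + \<beta> * ((transpose W *v x) \<bullet> (diag_mat psi_f *v (transpose W *v x)))"
  by (simp add: inv_impactG_def matrix_vector_mult_add_rdistrib scaleR_matrix_vector_assoc[symmetric]
      inner_add_right matrix_vector_mul_assoc[symmetric] dot_lmul_matrix[symmetric])

lemma transpose_inv_impactG: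
  "transpose (inv_impactG psi_id psi_f W \<alpha> \<beta>) = inv_impactG psi_id psi_f W \<alpha> \<beta>"
proof -
  have transpose_add: "transpose (A + B) = transpose A + transpose B" for A B :: "real ^ 'n ^ 'n"
    by (simp add: transpose_def vec_eq_iff)
  show ?thesis
    by (simp add: inv_impactG_def transpose_add transpose_scalar matrix_transpose_mul transpose_diag_mat
        matrix_mul_assoc)
qed

lemma eventually_at_within_positive_quadrant:
  "S \<subseteq> {0<..} \<times> {0<..} \<Longrightarrow> eventually (\<lambda>p. 0 < fst p \<and> 0 < snd p) (at c within S)"
  unfolding eventually_at_filter by (auto intro!: always_eventually)

lemma tendsto_sandwich_reciprocal:
  fixes s t f :: "'a \<Rightarrow> real"
  assumes "(s \<longlongrightarrow> 1) F" "(t \<longlongrightarrow> 0) F"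
    and "eventually (\<lambda>x. (2 - s x) * c - t x * e \<le> f x \<and> f x \<le> c / s x) F"
  shows "(f \<longlongrightarrow> c) F"
proof (rule tendsto_sandwich)
  show "eventually (\<lambda>x. (2 - s x) * c - t x * e \<le> f x) F" "eventually (\<lambda>x. f x \<le> c / s x) F"
    using assms(3) by (auto elim: eventually_mono)
  show "((\<lambda>x. (2 - s x) * c - t x * e) \<longlongrightarrow> c) F"
    using tendsto_diff[OF tendsto_mult_right[OF tendsto_diff[OF tendsto_const assms(1)]]
        tendsto_mult_right[OF assms(2)], of 2 c e] by simp
  show "((\<lambda>x. c / s x) \<longlongrightarrow> c) F"
    using tendsto_divide[OF tendsto_const assms(1), of c] by simp
qed

context
  fixes psi_id :: "real ^ 'n" and psi_f :: "real ^ 'k" and W :: "real ^ 'k ^ 'n"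
  assumes pos_id: "\<forall>i. psi_id $ i > 0"
    and pos_f: "\<forall>k. psi_f $ k > 0"
begin

lemma positive_definite_id: "positive_definite (diag_mat psi_id)"
  using pos_id by (simp add: positive_definite_diag_mat)

lemma positive_definite_f: "positive_definite (diag_mat psi_f)"
  using pos_f by (simp add: positive_definite_diag_mat)

lemma positive_definite_inv_impactG:
  assumes "0 < \<alpha>" "0 \<le> \<beta>"
  shows "positive_definite (inv_impactG psi_id psi_f W \<alpha> \<beta>)"
  unfolding positive_definite_def
proof (intro conjI allI impI transpose_inv_impactG)
  fix x :: "real ^ 'n" assume "x \<noteq> 0"
  then have "0 < \<alpha> * (x \<bullet> (diag_mat psi_id *v x))"
    using positive_definite_id assms(1) by (simp add: positive_definite_def)
  moreover have "0 \<le> \<beta> * ((transpose W *v x) \<bullet> (diag_mat psi_f *v (transpose W *v x)))"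
    using positive_definite_nonneg[OF positive_definite_f] assms(2) by simp
  ultimately show "0 < x \<bullet> (inv_impactG psi_id psi_f W \<alpha> \<beta> *v x)"
    unfolding inner_inv_impactG by linarith
qed

lemma inner_impactG_le_id:
  assumes "0 < \<alpha>" "0 \<le> \<beta>"
  shows "v \<bullet> (impactG psi_id psi_f W \<alpha> \<beta> *v v) \<le> v \<bullet> (matrix_inv (diag_mat psi_id) *v v) / \<alpha>"
  unfolding impactG_eq_matrix_inv
proof (rule inner_matrix_inv_le[OF positive_definite_inv_impactG[OF assms]])
  fix x
  have "0 \<le> \<beta> * ((transpose W *v x) \<bullet> (diag_mat psi_f *v (transpose W *v x)))"
    using positive_definite_nonneg[OF positive_definite_f] assms(2) by simp
  then have "2 * (v \<bullet> x) - x \<bullet> (inv_impactG psi_id psi_f W \<alpha> \<beta> *v x)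
      \<le> 2 * (v \<bullet> x) - \<alpha> * (x \<bullet> (diag_mat psi_id *v x))"
    unfolding inner_inv_impactG by linarith
  also have "\<dots> \<le> v \<bullet> (matrix_inv (diag_mat psi_id) *v v) / \<alpha>"
    using positive_definite_id assms(1) by (rule inner_matrix_inv_ge_scaled)
  finally show "2 * (v \<bullet> x) - x \<bullet> (inv_impactG psi_id psi_f W \<alpha> \<beta> *v x)
      \<le> v \<bullet> (matrix_inv (diag_mat psi_id) *v v) / \<alpha>" .
qed

lemma inner_impactG_ge_id:
  fixes v :: "real ^ 'n"
  assumes "0 < \<alpha>" "0 \<le> \<beta>"
  defines "x \<equiv> matrix_inv (diag_mat psi_id) *v v"
  shows "(2 - \<alpha>) * (v \<bullet> x) - \<beta> * ((transpose W *v x) \<bullet> (diag_mat psi_f *v (transpose W *v x)))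
    \<le> v \<bullet> (impactG psi_id psi_f W \<alpha> \<beta> *v v)"
proof -
  have "x \<bullet> (diag_mat psi_id *v x) = v \<bullet> x"
    unfolding x_def by (simp add: positive_definite_matrix_inv_cancel[OF positive_definite_id] inner_commute)
  then show ?thesis
    using inner_matrix_inv_ge[OF positive_definite_inv_impactG[OF assms(1,2)], of v x]
    by (simp add: impactG_eq_matrix_inv inner_inv_impactG algebra_simps)
qed

lemma inner_impactG_le_span:
  assumes "0 < \<alpha>" "0 < \<beta>"
  shows "(W *v u) \<bullet> (impactG psi_id psi_f W \<alpha> \<beta> *v (W *v u))
    \<le> u \<bullet> (matrix_inv (diag_mat psi_f) *v u) / \<beta>"
  unfolding impactG_eq_matrix_inv
proof (rule inner_matrix_inv_le[OF positive_definite_inv_impactG[OF assms(1) less_imp_le[OF assms(2)]]])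
  fix x
  have "0 \<le> \<alpha> * (x \<bullet> (diag_mat psi_id *v x))"
    using positive_definite_nonneg[OF positive_definite_id] assms(1) by simp
  moreover have "(W *v u) \<bullet> x = u \<bullet> (transpose W *v x)"
    by (metis inner_commute inner_matrix_vector_transpose)
  ultimately have "2 * ((W *v u) \<bullet> x) - x \<bullet> (inv_impactG psi_id psi_f W \<alpha> \<beta> *v x)
      \<le> 2 * (u \<bullet> (transpose W *v x))
        - \<beta> * ((transpose W *v x) \<bullet> (diag_mat psi_f *v (transpose W *v x)))"
    unfolding inner_inv_impactG by linarith
  also have "\<dots> \<le> u \<bullet> (matrix_inv (diag_mat psi_f) *v u) / \<beta>"
    using positive_definite_f assms(2) by (rule inner_matrix_inv_ge_scaled)
  finally show "2 * ((W *v u) \<bullet> x) - x \<bullet> (inv_impactG psi_id psi_f W \<alpha> \<beta> *v x)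
      \<le> u \<bullet> (matrix_inv (diag_mat psi_f) *v u) / \<beta>" .
qed

lemma inner_impactG_ge_span:
  assumes "0 < \<alpha>" "0 \<le> \<beta>" and x: "transpose W *v x = matrix_inv (diag_mat psi_f) *v u"
  shows "(2 - \<beta>) * (u \<bullet> (matrix_inv (diag_mat psi_f) *v u)) - \<alpha> * (x \<bullet> (diag_mat psi_id *v x))
    \<le> (W *v u) \<bullet> (impactG psi_id psi_f W \<alpha> \<beta> *v (W *v u))"
proof -
  have "(W *v u) \<bullet> x = u \<bullet> (matrix_inv (diag_mat psi_f) *v u)"
    by (metis inner_commute inner_matrix_vector_transpose x)
  moreover have "(transpose W *v x) \<bullet> (diag_mat psi_f *v (transpose W *v x))
      = u \<bullet> (matrix_inv (diag_mat psi_f) *v u)"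
    unfolding x by (simp add: positive_definite_matrix_inv_cancel[OF positive_definite_f] inner_commute)
  ultimately show ?thesis
    using inner_matrix_inv_ge[OF positive_definite_inv_impactG[OF assms(1,2)], of "W *v u" x]
    by (simp add: impactG_eq_matrix_inv inner_inv_impactG algebra_simps)
qed

lemma inner_impactG_ge_kernel:
  assumes "0 < \<alpha>" "0 \<le> \<beta>" and z: "transpose W *v z = 0" "z \<noteq> 0"
  shows "(v \<bullet> z)\<^sup>2 / (z \<bullet> (diag_mat psi_id *v z)) / \<alpha> \<le> v \<bullet> (impactG psi_id psi_f W \<alpha> \<beta> *v v)"
proof -
  define p where "p = z \<bullet> (diag_mat psi_id *v z)"
  have "0 < p"
    using positive_definite_id z(2) unfolding p_def positive_definite_def by blast
  have zMz: "z \<bullet> (inv_impactG psi_id psi_f W \<alpha> \<beta> *v z) = \<alpha> * p"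
    unfolding inner_inv_impactG z(1) p_def by simp
  define t where "t = (v \<bullet> z) / (\<alpha> * p)"
  have "2 * (v \<bullet> (t *\<^sub>R z)) - (t *\<^sub>R z) \<bullet> (inv_impactG psi_id psi_f W \<alpha> \<beta> *v (t *\<^sub>R z))
      = 2 * t * (v \<bullet> z) - \<alpha> * t\<^sup>2 * p"
    by (simp add: matrix_vector_mult_scaleR zMz power2_eq_square)
  also have "\<dots> = (v \<bullet> z)\<^sup>2 / p / \<alpha>"
    using \<open>0 < p\<close> assms(1) by (simp add: t_def field_simps power2_eq_square)
  finally show ?thesis
    using inner_matrix_inv_ge[OF positive_definite_inv_impactG[OF assms(1,2)], of v "t *\<^sub>R z"]
    by (simp add: impactG_eq_matrix_inv p_def)
qed

lemma Cbar_tendsto_id: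
  assumes S: "S \<subseteq> {0<..} \<times> {0<..}"
  shows "((\<lambda>(\<alpha>, \<beta>). Cbar psi_id psi_f W \<alpha> \<beta> v) \<longlongrightarrow>
      1/2 * (v \<bullet> (matrix_inv (diag_mat psi_id) *v v))) (at (1, 0) within S)"
proof -
  define x where "x = matrix_inv (diag_mat psi_id) *v v"
  have "((\<lambda>p. v \<bullet> (impactG psi_id psi_f W (fst p) (snd p) *v v)) \<longlongrightarrow> v \<bullet> x) (at (1, 0) within S)"
  proof (rule tendsto_sandwich_reciprocal
      [where e = "(transpose W *v x) \<bullet> (diag_mat psi_f *v (transpose W *v x))"])
    show "(fst \<longlongrightarrow> 1) (at (1, 0) within S)" "(snd \<longlongrightarrow> 0) (at (1, 0) within S)"
      using tendsto_fst[OF tendsto_ident_at] tendsto_snd[OF tendsto_ident_at] by fastforce+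
    show "eventually (\<lambda>p. (2 - fst p) * (v \<bullet> x)
          - snd p * ((transpose W *v x) \<bullet> (diag_mat psi_f *v (transpose W *v x)))
        \<le> v \<bullet> (impactG psi_id psi_f W (fst p) (snd p) *v v)
      \<and> v \<bullet> (impactG psi_id psi_f W (fst p) (snd p) *v v) \<le> v \<bullet> x / fst p) (at (1, 0) within S)"
      using eventually_at_within_positive_quadrant[OF S]
    proof eventually_elim
      case (elim p)
      then show ?case
        using inner_impactG_ge_id[of "fst p" "snd p" v] inner_impactG_le_id[of "fst p" "snd p" v]
        by (simp add: x_def)
    qed
  qed
  then show ?thesis
    unfolding Cbar_def x_def case_prod_unfold by (rule tendsto_mult_left)
qed

lemma Cbar_filterlim_at_top:
  assumes S: "S \<subseteq> {0<..} \<times> {0<..}" and v: "v \<notin> span (columns W)"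
  shows "filterlim (\<lambda>(\<alpha>, \<beta>). Cbar psi_id psi_f W \<alpha> \<beta> v) at_top (at (0, 1) within S)"
proof -
  obtain z where z: "transpose W *v z = 0" "v \<bullet> z \<noteq> 0"
    using not_in_span_columns_orthogonal[OF v] .
  then have "z \<noteq> 0"
    by auto
  define \<kappa> where "\<kappa> = (v \<bullet> z)\<^sup>2 / (z \<bullet> (diag_mat psi_id *v z))"
  have "0 < z \<bullet> (diag_mat psi_id *v z)"
    using positive_definite_id \<open>z \<noteq> 0\<close> unfolding positive_definite_def by blast
  with z(2) have "0 < \<kappa> / 2"
    by (simp add: \<kappa>_def)
  have "filterlim (\<lambda>p. \<kappa> / 2 * inverse (fst p)) at_top (at (0, 1) within S)"
  proof (rule filterlim_tendsto_pos_mult_at_top[OF tendsto_const \<open>0 < \<kappa> / 2\<close> filterlim_inverse_at_top])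
    show "(fst \<longlongrightarrow> 0) (at (0, 1) within S)"
      using tendsto_fst[OF tendsto_ident_at, of "(0, 1)" S] by simp
    show "eventually (\<lambda>p. 0 < fst p) (at (0, 1) within S)"
      using eventually_at_within_positive_quadrant[OF S] by (rule eventually_mono) simp
  qed
  moreover have "eventually (\<lambda>p. \<kappa> / 2 * inverse (fst p) \<le> (\<lambda>(\<alpha>, \<beta>). Cbar psi_id psi_f W \<alpha> \<beta> v) p)
      (at (0, 1) within S)"
    using eventually_at_within_positive_quadrant[OF S]
  proof eventually_elim
    case (elim p)
    then have "\<kappa> / fst p \<le> v \<bullet> (impactG psi_id psi_f W (fst p) (snd p) *v v)"
      unfolding \<kappa>_def using inner_impactG_ge_kernel[OF _ _ z(1) \<open>z \<noteq> 0\<close>] by simp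
    moreover have "(\<lambda>(\<alpha>, \<beta>). Cbar psi_id psi_f W \<alpha> \<beta> v) p
        = 1/2 * (v \<bullet> (impactG psi_id psi_f W (fst p) (snd p) *v v))"
      by (simp add: Cbar_def case_prod_unfold)
    ultimately show ?case
      by (simp add: inverse_eq_divide)
  qed
  ultimately show ?thesis
    by (rule filterlim_at_top_mono)
qed

lemma Cbar_tendsto_span:
  assumes S: "S \<subseteq> {0<..} \<times> {0<..}" and W: "lin_indep_columns W"
  shows "((\<lambda>(\<alpha>, \<beta>). Cbar psi_id psi_f W \<alpha> \<beta> (W *v u)) \<longlongrightarrow>
      1/2 * (u \<bullet> (matrix_inv (diag_mat psi_f) *v u))) (at (0, 1) within S)"
proof -
  obtain x where x: "transpose W *v x = matrix_inv (diag_mat psi_f) *v u"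
    using lin_indep_columns_transpose_surj[OF W] .
  let ?c = "u \<bullet> (matrix_inv (diag_mat psi_f) *v u)"
  have "((\<lambda>p. (W *v u) \<bullet> (impactG psi_id psi_f W (fst p) (snd p) *v (W *v u))) \<longlongrightarrow> ?c)
      (at (0, 1) within S)"
  proof (rule tendsto_sandwich_reciprocal[where e = "x \<bullet> (diag_mat psi_id *v x)"])
    show "(snd \<longlongrightarrow> 1) (at (0, 1) within S)" "(fst \<longlongrightarrow> 0) (at (0, 1) within S)"
      using tendsto_fst[OF tendsto_ident_at] tendsto_snd[OF tendsto_ident_at] by fastforce+
    show "eventually (\<lambda>p. (2 - snd p) * ?c - fst p * (x \<bullet> (diag_mat psi_id *v x))
        \<le> (W *v u) \<bullet> (impactG psi_id psi_f W (fst p) (snd p) *v (W *v u))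
      \<and> (W *v u) \<bullet> (impactG psi_id psi_f W (fst p) (snd p) *v (W *v u)) \<le> ?c / snd p)
      (at (0, 1) within S)"
      using eventually_at_within_positive_quadrant[OF S]
    proof eventually_elim
      case (elim p)
      then show ?case
        using inner_impactG_ge_span[of "fst p" "snd p" x u] inner_impactG_le_span[of "fst p" "snd p" u] x
        by simp
    qed
  qed
  then show ?thesis
    unfolding Cbar_def case_prod_unfold by (rule tendsto_mult_left)
qed

end

theorem proposition2:
  fixes psi_id :: "real ^ 'n" and psi_f :: "real ^ 'k" and W :: "real ^ 'k ^ 'n"
  assumes pos_id: "\<forall>i. psi_id $ i > 0"
    and pos_f: "\<forall>k. psi_f $ k > 0"
    and indep: "lin_indep_columns W"
  shows
    "(\<forall>v. ((\<lambda>(\<alpha>, \<beta>). Cbar psi_id psi_f W \<alpha> \<beta> v) \<longlongrightarrow>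
            1/2 * (v \<bullet> (matrix_inv (diag_mat psi_id) *v v)))
          (at (1, 0) within ({0<..1} \<times> {0<..1}))
       \<and> 1/2 * (v \<bullet> (matrix_inv (diag_mat psi_id) *v v)) = 1/2 * (\<Sum>i\<in>UNIV. (v $ i)\<^sup>2 / psi_id $ i))
     \<and> (\<forall>v. v \<notin> span (columns W) \<longrightarrow>
       filterlim (\<lambda>(\<alpha>, \<beta>). Cbar psi_id psi_f W \<alpha> \<beta> v) at_top
          (at (0, 1) within ({0<..1} \<times> {0<..1})))
     \<and> (\<forall>u. ((\<lambda>(\<alpha>, \<beta>). Cbar psi_id psi_f W \<alpha> \<beta> (W *v u)) \<longlongrightarrow>
            1/2 * (u \<bullet> (matrix_inv (diag_mat psi_f) *v u)))
          (at (0, 1) within ({0<..1} \<times> {0<..1})))"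
proof -
  have S: "{0<..1::real} \<times> {0<..1::real} \<subseteq> {0<..} \<times> {0<..}"
    by auto
  have "v \<bullet> (matrix_inv (diag_mat psi_id) *v v) = (\<Sum>i\<in>UNIV. (v $ i)\<^sup>2 / psi_id $ i)" for v
    using pos_id by (simp add: inner_matrix_inv_diag_mat less_imp_neq[symmetric])
  then show ?thesis
    using Cbar_tendsto_id[OF pos_id pos_f S] Cbar_filterlim_at_top[OF pos_id pos_f S]
      Cbar_tendsto_span[OF pos_id pos_f S indep]
    by simp
qed

end
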